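(* Let $d\ge2$, $\varepsilon>0$ and $\mathbf h\in\Delta_d$, and let $T=T_{\mathbf h}$ with alternance points $0=\nu_1<\nu_2<\cdots<\nu_d$. Then $$\kappa(\mathbf h,\varepsilon)=\inf\Bigl\{\frac{1-T(t)}{T'(t)-\varepsilon T(t)}\ :\ t\in[0,\nu_2],\ T'(t)>\varepsilon T(t)\Bigr\},$$ and moreover $$\kappa(\mathbf h,\varepsilon)>\frac{2\varepsilon}{M_2(\mathbf h)+2\varepsilon^2}.$$
   Context: Let $\mathbb R_+=[0,\infty)$ and $\|f\|_{\mathbb R_+}=\sup_{t\ge 0}|f(t)|$. For a vector $\mathbf h=(h_1,\dots,h_d)$ with $0<h_1\le\cdots\le h_d$, let $\mathcal P_{\mathbf h}$ be the $d$-dimensional space of real functions on $\mathbb R_+$ spanned by the following system: each distinct value $\eta$ occurring exactly $m$ times among $h_1,\dots,h_d$ contributes the $m$ functions $e^{-\eta t}, te^{-\eta t},\dots,t^{m-1}e^{-\eta t}$. $M_2(\mathbf h)=\max\{\|p''\|_{\mathbb R_+}: p\in\mathcal P_{\mathbf h},\ \|p\|_{\mathbb R_+}\le1\}$. $\Delta_d=\{\mathbf h\in\mathbb R^d: 0<h_1\le\cdots\le h_d\le1\}$. The $\mathbf h$-Chebyshev polynomial $T_{\mathbf h}$ is the unique $T\in\mathcal P_{\mathbf h}$ with $\|T\|_{\mathbb R_+}=1$ for which there exist points $0=\nu_1<\nu_2<\cdots<\nu_d$ with $T(\nu_j)=(-1)^j$ for $j=1,\dots,d$. For $\varepsilon>0$,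 $\kappa(\mathbf h,\varepsilon)$ is the infimum of $\dfrac{1-p(0)}{p'(0)-\varepsilon p(0)}$ over all $p\in\mathcal P_{\mathbf h}$ with $\|p\|_{\mathbb R_+}\le1$ and $p'(0)>\varepsilon p(0)$. *)

theory Defs
  imports "HOL-Analysis.Analysis"
begin

definition sup_norm :: "(real \<Rightarrow> real) \<Rightarrow> real" where
  "sup_norm f = (SUP t\<in>{0..}. \<bar>f t\<bar>)"

text \<open>The vector h = (h_1,...,h_d) is a list (0-indexed). The i-th basis function is
  t^k e^(-h_i t) where k is the number of earlier entries equal to h_i; for sorted h
  this gives exactly e^(-eta t),...,t^(m-1) e^(-eta t) for each value eta of multiplicity m.\<close>
definition exp_basis :: "real list \<Rightarrow> nat \<Rightarrow> real \<Rightarrow> real" where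
  "exp_basis h i t = t ^ card {j. j < i \<and> h ! j = h ! i} * exp (- (h ! i) * t)"

definition Pspace :: "real list \<Rightarrow> (real \<Rightarrow> real) set" where
  "Pspace h = {p. \<exists>c :: nat \<Rightarrow> real. p = (\<lambda>t. \<Sum>i<length h. c i * exp_basis h i t)}"

definition Delta :: "nat \<Rightarrow> real list set" where
  "Delta d = {h. length h = d \<and> sorted h \<and> (\<forall>x\<in>set h. 0 < x \<and> x \<le> 1)}"

definition M2 :: "real list \<Rightarrow> real" where
  "M2 h = Sup {sup_norm (deriv (deriv p)) | p. p \<in> Pspace h \<and> sup_norm p \<le> 1}"

definition kappa :: "real list \<Rightarrow> real \<Rightarrow> real" where
  "kappa h \<epsilon> = Inf {(1 - p 0) / (deriv p 0 - \<epsilon> * p 0) | p.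
      p \<in> Pspace h \<and> sup_norm p \<le> 1 \<and> deriv p 0 > \<epsilon> * p 0}"

text \<open>T is the h-Chebyshev polynomial with alternance points nu_1 < ... < nu_d (1-indexed).\<close>
definition is_cheb_alt :: "real list \<Rightarrow> (real \<Rightarrow> real) \<Rightarrow> (nat \<Rightarrow> real) \<Rightarrow> bool" where
  "is_cheb_alt h T \<nu> \<longleftrightarrow> T \<in> Pspace h \<and> sup_norm T = 1 \<and> \<nu> 1 = 0 \<and>
     (\<forall>j\<in>{1..<length h}. \<nu> j < \<nu> (Suc j)) \<and>
     (\<forall>j\<in>{1..length h}. T (\<nu> j) = (-1) ^ j)"

end

theory Submission
  imports Defs "HOL-Computational_Algebra.Polynomial"
begin

(*
  Sections 2-4 show that P_h is the space of exponential sums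
  sum_a P_a(x) e^(-a x) with deg P_a below the multiplicity of a; such a sum with at most
  n coefficients and n zeros vanishes, so a nonzero element of P_h has fewer than d zeros.
  Section 5 shows that T increases from -1 to 1 on [0, nu_2] and proves the comparison
  lemma: |q| <= 1 on R_+ and q(0) = T(t) with t in [0, nu_2] imply q'(0) <= T'(t), since
  otherwise T(. + t) - q has d zeros.  This reduces kappa to the shifts of T (first claim)
  and bounds derivatives on the unit ball, so |T''| <= M_2(h) < oo.  Taylor's formula and
  the fact that T'' is constant on no interval give M_2(h)(1 - T(t)) > T'(t)^2/2 where
  T'(t) > 0; by compactness of [0, nu_2] the numerator of
  (1 - T)/(T' - eps T) - 2 eps/(M_2 + 2 eps^2) stays bounded away from 0 (second claim).
*)

section \<open>Elementary facts from real analysis\<close>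

lemma chain_strict_mono_on:
  fixes f :: "nat \<Rightarrow> 'a::order"
  assumes "\<forall>j\<in>{m..<n}. f j < f (Suc j)"
  shows "strict_mono_on {m..n} f"
proof -
  have "f i < f j" if "m \<le> i" "i < j" "j \<le> n" for i j
    using that
  proof (induction j)
    case (Suc j)
    show ?case
    proof (cases "i = j")
      case True
      then show ?thesis using assms Suc.prems by auto
    next
      case False
      then have "f i < f j" using Suc by simp
      also have "f j < f (Suc j)" using assms Suc.prems False by auto
      finally show ?thesis .
    qed
  qed simp
  then show ?thesis by (auto intro!: strict_mono_onI)
qed

lemma IVT_sign_change:
  fixes f :: "real \<Rightarrow> real"
  assumes "a < b" "continuous_on {a..b} f" "f a * f b < 0"
  shows "\<exists>z. a < z \<and> z < b \<and> f z = 0"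
proof -
  have "f a < 0 \<and> 0 < f b \<or> f a > 0 \<and> 0 > f b" using assms(3) by (auto simp: mult_less_0_iff)
  then obtain z where z: "a \<le> z" "z \<le> b" "f z = 0"
    using IVT'[of f a 0 b] IVT2'[of f b 0 a] assms(1,2) by force
  then have "z \<noteq> a" "z \<noteq> b" using assms(3) by auto
  then show ?thesis using z by force
qed

lemma alternation_zeros:
  fixes y :: "nat \<Rightarrow> real" and f :: "real \<Rightarrow> real"
  assumes f: "continuous_on UNIV f"
    and y: "\<forall>j\<in>{1..<n}. y j < y (Suc j)"
    and sgn: "\<forall>j\<in>{1..n}. (-1) ^ j * f (y j) > 0"
  shows "\<exists>Z. finite Z \<and> card Z = n - 1 \<and> (\<forall>z\<in>Z. y 1 < z \<and> z < y n \<and> f z = 0)"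
  using y sgn
proof (induction n)
  case (Suc n)
  show ?case
  proof (cases "n = 0")
    case False
    with Suc obtain Z where Z: "finite Z" "card Z = n - 1" "\<forall>z\<in>Z. y 1 < z \<and> z < y n \<and> f z = 0"
      by auto
    have lt: "y n < y (Suc n)" using Suc.prems(1) False by simp
    have "(-1) ^ n * f (y n) > 0" "(-1) ^ Suc n * f (y (Suc n)) > 0"
      using bspec[OF Suc.prems(2), of n] bspec[OF Suc.prems(2), of "Suc n"] False by simp_all
    then have "f (y n) * f (y (Suc n)) < 0"
      by (cases "even n") (auto simp: mult_pos_neg mult_neg_pos)
    then obtain z where z: "y n < z" "z < y (Suc n)" "f z = 0"
      using IVT_sign_change[OF lt continuous_on_subset[OF f]] by blast
    have "y 1 \<le> y n"
      using strict_mono_onD[OF chain_strict_mono_on[OF Suc.prems(1)], of 1 n] False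
      by (cases "n = 1") auto
    then have "\<forall>w\<in>insert z Z. y 1 < w \<and> w < y (Suc n) \<and> f w = 0"
      using Z(3) z lt by force
    moreover have "z \<notin> Z" using Z(3) z(1) by force
    ultimately show ?thesis using Z False by (intro exI[of _ "insert z Z"]) auto
  qed (intro exI[of _ "{}"], simp)
qed (intro exI[of _ "{}"], simp)

lemma mono_of_deriv_nonneg:
  fixes f f' :: "real \<Rightarrow> real"
  assumes "\<And>x. (f has_real_derivative f' x) (at x)" "a \<le> b"
    and "\<And>x. a < x \<Longrightarrow> x < b \<Longrightarrow> 0 \<le> f' x"
  shows "f a \<le> f b"
proof (rule DERIV_nonneg_imp_increasing_open[OF assms(2)])
  show "\<And>x. a < x \<Longrightarrow> x < b \<Longrightarrow> \<exists>y. (f has_real_derivative y) (at x) \<and> 0 \<le> y"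
    using assms(1,3) by blast
  show "continuous_on {a..b} f"
    using assms(1) by (meson DERIV_continuous continuous_at_imp_continuous_on)
qed

lemma deriv_zero_on_const_interval:
  fixes f f' :: "real \<Rightarrow> real"
  assumes "\<And>x. (f has_real_derivative f' x) (at x)" "\<forall>x\<in>{a<..<b}. f x = c" "a < z" "z < b"
  shows "f' z = 0"
proof (rule DERIV_local_const[OF assms(1)])
  show "0 < min (z - a) (b - z)" using assms(3,4) by simp
  show "\<forall>y. \<bar>z - y\<bar> < min (z - a) (b - z) \<longrightarrow> f z = f y"
    using assms(2-4) by (auto simp: abs_less_iff)
qed

lemma const_second_deriv_quadratic:
  fixes f f' :: "real \<Rightarrow> real"
  assumes f': "\<And>x. (f has_real_derivative f' x) (at x)"
    and f'': "\<And>x. (f' has_real_derivative K) (at x)"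
  shows "f x = f 0 + f' 0 * x + K / 2 * x ^ 2"
proof -
  have "((\<lambda>x. f' x - K * x) has_real_derivative 0) (at x)" for x
    using DERIV_diff[OF f'' DERIV_cmult[OF DERIV_ident, of K]] by simp
  then have lin: "f' x = f' 0 + K * x" for x
    using DERIV_isconst_all[of "\<lambda>x. f' x - K * x" x 0] by simp
  have d: "((\<lambda>x. f x - f' 0 * x - K / 2 * x ^ 2) has_real_derivative f' x - f' 0 - K * x) (at x)" for x
    by (auto intro!: derivative_eq_intros f')
  have "((\<lambda>x. f x - f' 0 * x - K / 2 * x ^ 2) has_real_derivative 0) (at x)" for x
    using d[of x] lin[of x] by simp
  then show ?thesis
    using DERIV_isconst_all[of "\<lambda>x. f x - f' 0 * x - K / 2 * x ^ 2" x 0] by simp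
qed

lemma bounded_quadratic_trivial:
  fixes b K C :: real
  assumes bnd: "\<forall>x\<ge>0. \<bar>b * x + K * x ^ 2\<bar> \<le> C"
  shows "K = 0 \<and> b = 0"
proof -
  have C: "0 \<le> C" using bnd[rule_format, of 0] by simp
  have tri: "\<bar>A - 2 * B\<bar> \<le> \<bar>A\<bar> + 2 * \<bar>B\<bar>" for A B :: real by arith
  have K: "K = 0"
  proof (rule ccontr)
    assume "K \<noteq> 0"
    define x where "x = sqrt ((2 * C + 1) / \<bar>K\<bar>)"
    have x: "0 \<le> x" "\<bar>K\<bar> * x ^ 2 = 2 * C + 1"
      using C \<open>K \<noteq> 0\<close> by (auto simp: x_def)
    have "2 * (K * x ^ 2) = (b * (2 * x) + K * (2 * x) ^ 2) - 2 * (b * x + K * x ^ 2)"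
      by (simp add: algebra_simps power2_eq_square)
    also have "\<bar>\<dots>\<bar> \<le> \<bar>b * (2 * x) + K * (2 * x) ^ 2\<bar> + 2 * \<bar>b * x + K * x ^ 2\<bar>"
      by (rule tri)
    also have "\<dots> \<le> 3 * C"
      using bnd[rule_format, of x] bnd[rule_format, of "2 * x"] x(1) by simp
    finally show False using x(2) C by (simp add: abs_mult)
  qed
  have "b = 0"
  proof (rule ccontr)
    assume "b \<noteq> 0"
    have "\<bar>b * ((C + 1) / \<bar>b\<bar>)\<bar> \<le> C"
      using bnd[rule_format, of "(C + 1) / \<bar>b\<bar>"] K C by simp
    then show False using \<open>b \<noteq> 0\<close> C by (simp add: abs_mult)
  qed
  with K show ?thesis by simp
qed

lemma convex_touching_flat:
  fixes g g' g'' :: "real \<Rightarrow> real"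
  assumes g': "\<And>x. (g has_real_derivative g' x) (at x)"
    and g'': "\<And>x. (g' has_real_derivative g'' x) (at x)"
    and convex: "\<And>x. 0 \<le> x \<Longrightarrow> 0 \<le> g'' x"
    and init: "g 0 = 0" "g' 0 = 0" and x0: "0 < x0" "g x0 \<le> 0"
  shows "\<forall>z\<in>{0<..<x0}. g'' z = 0"
proof -
  have "g' 0 \<le> g' x" if "0 \<le> x" for x
    by (rule mono_of_deriv_nonneg[OF g'' that]) (use convex in auto)
  then have g'_nonneg: "0 \<le> g' x" if "0 \<le> x" for x
    using that init by simp
  have g_mono: "g a \<le> g b" if "0 \<le> a" "a \<le> b" for a b
    by (rule mono_of_deriv_nonneg[OF g' that(2)]) (use g'_nonneg that in auto)
  have g_zero: "\<forall>x\<in>{0<..<x0}. g x = 0"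
  proof
    fix x assume "x \<in> {0<..<x0}"
    then have "g 0 \<le> g x" "g x \<le> g x0" using g_mono by auto
    then show "g x = 0" using init x0 by linarith
  qed
  have "\<forall>x\<in>{0<..<x0}. g' x = 0"
    using deriv_zero_on_const_interval[OF g' g_zero] by simp
  then show ?thesis
    using deriv_zero_on_const_interval[OF g''] by simp
qed

lemma Taylor_bound_rigid:
  fixes f f' f'' :: "real \<Rightarrow> real"
  assumes f': "\<And>x. (f has_real_derivative f' x) (at x)"
    and f'': "\<And>x. (f' has_real_derivative f'' x) (at x)"
    and lower: "\<And>x. t \<le> x \<Longrightarrow> -M \<le> f'' x"
    and x0: "0 < x0" "f (t + x0) \<le> f t + f' t * x0 - M / 2 * x0 ^ 2"
  shows "\<forall>z\<in>{t<..<t + x0}. f'' z = -M"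
proof -
  define g where "g x = f (x + t) - f t - f' t * x + M / 2 * x ^ 2" for x
  define g' where "g' x = f' (x + t) - f' t + M * x" for x
  define g'' where "g'' x = f'' (x + t) + M" for x
  have dg: "(g has_real_derivative g' x) (at x)" for x
  proof -
    have "((\<lambda>x. f (x + t)) has_real_derivative f' (x + t)) (at x)"
      using f' DERIV_shift by blast
    then have "(g has_real_derivative f' (x + t) - 0 - f' t * 1 + M / 2 * (real 2 * x ^ (2 - Suc 0))) (at x)"
      unfolding g_def[abs_def]
      by (intro DERIV_add DERIV_diff DERIV_cmult DERIV_const DERIV_ident DERIV_pow)
    then show ?thesis by (simp add: g'_def)
  qed
  have dg': "(g' has_real_derivative g'' x) (at x)" for x
  proof -
    have "((\<lambda>x. f' (x + t)) has_real_derivative f'' (x + t)) (at x)"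
      using f'' DERIV_shift by blast
    then have "(g' has_real_derivative f'' (x + t) - 0 + M * 1) (at x)"
      unfolding g'_def[abs_def] by (intro DERIV_add DERIV_diff DERIV_cmult DERIV_const DERIV_ident)
    then show ?thesis by (simp add: g''_def)
  qed
  have g''_nonneg: "0 \<le> g'' x" if "0 \<le> x" for x
    using lower[of "x + t"] that by (simp add: g''_def)
  have g_x0: "g x0 \<le> 0" using x0(2) by (simp add: g_def add.commute)
  have g_0: "g 0 = 0" and g'_0: "g' 0 = 0" by (simp_all add: g_def g'_def)
  have flat: "\<forall>z\<in>{0<..<x0}. g'' z = 0"
    using convex_touching_flat[OF dg dg' g''_nonneg g_0 g'_0 x0(1) g_x0] .
  show ?thesis
  proof
    fix z assume "z \<in> {t<..<t + x0}"
    then have "z - t \<in> {0<..<x0}" by auto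
    then have "g'' (z - t) = 0" using flat by blast
    then show "f'' z = -M" by (simp add: g''_def)
  qed
qed

lemma shrink_in_unit_interval:
  fixes y \<delta> :: real
  assumes y: "y \<in> {-1..1}" and \<delta>: "0 < \<delta>" "\<delta> < 1"
  shows "(1 - \<delta>) * y \<in> {-1..1}" "(1 - \<delta>) * y < 1"
proof -
  have "\<bar>(1 - \<delta>) * y\<bar> \<le> \<bar>y\<bar>" using \<delta> by (simp add: abs_mult mult_left_le_one_le)
  then show "(1 - \<delta>) * y \<in> {-1..1}" using y by (auto simp: abs_le_iff)
  show "(1 - \<delta>) * y < 1"
  proof (cases "y \<le> 0")
    case True
    then show ?thesis using \<delta> mult_nonneg_nonpos[of "1 - \<delta>" y] by simp
  next
    case False
    then have "(1 - \<delta>) * y < 1 * y" using \<delta> by (intro mult_strict_right_mono) auto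
    then show ?thesis using y by simp
  qed
qed

lemma neg_deriv_right:
  fixes f :: "real \<Rightarrow> real"
  assumes "(f has_real_derivative D) (at a)" "D < 0" "a < b"
  shows "\<exists>x. a < x \<and> x < b \<and> f x < f a"
proof -
  obtain \<delta> where \<delta>: "\<delta> > 0" "\<forall>e>0. e < \<delta> \<longrightarrow> f (a + e) < f a"
    using DERIV_neg_dec_right[OF assms(1,2)] by blast
  define e where "e = min (\<delta> / 2) ((b - a) / 2)"
  have "0 < e" "e < \<delta>" "e < b - a" using \<delta>(1) assms(3) by (auto simp: e_def min_less_iff_disj)
  then show ?thesis using \<delta>(2) by (intro exI[of _ "a + e"]) auto
qed

text \<open>Rolle's theorem, iterated: a function with n + 1 zeros has a derivative with n zeros.
  The zeros of f' found lie below the largest zero of f, which keeps them distinct.\<close>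
lemma Rolle_zero_count:
  fixes f f' :: "real \<Rightarrow> real"
  assumes f': "\<And>x. (f has_real_derivative f' x) (at x)"
  shows "finite Z \<Longrightarrow> Suc n \<le> card Z \<Longrightarrow> \<forall>z\<in>Z. f z = 0 \<Longrightarrow>
     \<exists>Z'. finite Z' \<and> n \<le> card Z' \<and> (\<forall>z\<in>Z'. f' z = 0 \<and> z < Max Z)"
proof (induction n arbitrary: Z)
  case 0
  then show ?case by (intro exI[of _ "{}"]) auto
next
  case (Suc n)
  define m where "m = Max Z"
  define Z0 where "Z0 = Z - {m}"
  have mZ: "m \<in> Z" using Max_in[OF Suc.prems(1)] Suc.prems(2) m_def by fastforce
  have fZ0: "finite Z0" and cZ0: "Suc n \<le> card Z0"
    using mZ Suc.prems(1,2) by (auto simp: Z0_def)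
  from Suc.IH[OF fZ0 cZ0] Suc.prems(3) obtain Z' where Z': "finite Z'" "n \<le> card Z'"
     "\<forall>z\<in>Z'. f' z = 0 \<and> z < Max Z0" unfolding Z0_def by auto
  have M0: "Max Z0 \<in> Z0" using Max_in[OF fZ0] cZ0 by fastforce
  then have lt: "Max Z0 < m" using Suc.prems(1) by (auto simp: Z0_def m_def order.strict_iff_order)
  have "f (Max Z0) = f m" using M0 mZ Suc.prems(3) Z0_def by auto
  with MVT2[OF lt, of f f'] f' obtain \<xi> where xi: "Max Z0 < \<xi>" "\<xi> < m" "f' \<xi> = 0" by auto
  have "\<xi> \<notin> Z'" using Z'(3) xi(1) by force
  then show ?case
    using Z' xi lt m_def by (intro exI[of _ "insert \<xi> Z'"]) auto
qed

lemma power_div_fact_le_exp: "0 \<le> (y::real) \<Longrightarrow> y ^ j / fact j \<le> exp y"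
proof -
  assume y: "0 \<le> y"
  have s: "(\<lambda>n. y ^ n / fact n) sums exp y"
    using exp_converges[of y] by (simp add: divide_inverse mult.commute)
  have "sum (\<lambda>n. y ^ n / fact n) {j} \<le> suminf (\<lambda>n. y ^ n / fact n)"
    by (rule sum_le_suminf) (use s y in \<open>auto simp: sums_iff\<close>)
  then show ?thesis using s by (simp add: sums_iff)
qed

lemma power_exp_bound:
  fixes c x :: real
  assumes "0 < c" "0 \<le> x"
  shows "x ^ j * exp (- c * x) \<le> fact j / c ^ j"
proof -
  have "(c * x) ^ j / fact j \<le> exp (c * x)" using power_div_fact_le_exp[of "c * x" j] assms by simp
  then have "x ^ j \<le> fact j * exp (c * x) / c ^ j"
    using assms by (simp add: power_mult_distrib divide_le_eq le_divide_eq mult.commute)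
  then have "x ^ j * exp (- c * x) \<le> fact j * exp (c * x) / c ^ j * exp (- c * x)"
    by (rule mult_right_mono) simp
  also have "\<dots> = fact j / c ^ j" by (simp add: exp_minus field_simps)
  finally show ?thesis .
qed

section \<open>Exponential sums and their zeros\<close>

text \<open>The shift s is needed in the zero count, where
  one exponential factor is divided out before differentiating.\<close>
definition exp_sum :: "real set \<Rightarrow> (real \<Rightarrow> real poly) \<Rightarrow> real \<Rightarrow> real \<Rightarrow> real" where
  "exp_sum A P s x = (\<Sum>a\<in>A. poly (P a) x * exp ((s - a) * x))"

definition exp_sum_dcoeffs :: "(real \<Rightarrow> real poly) \<Rightarrow> real \<Rightarrow> real \<Rightarrow> real poly" where
  "exp_sum_dcoeffs P s a = pderiv (P a) + [:s - a:] * P a"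

lemma exp_sum_has_derivative:
  "(exp_sum A P s has_real_derivative exp_sum A (exp_sum_dcoeffs P s) s x) (at x)"
proof (cases "finite A")
  case True
  have "((\<lambda>x. \<Sum>a\<in>A. poly (P a) x * exp ((s - a) * x)) has_real_derivative
        (\<Sum>a\<in>A. poly (pderiv (P a)) x * exp ((s - a) * x)
                  + poly (P a) x * (exp ((s - a) * x) * (s - a)))) (at x)"
  proof (rule DERIV_sum)
    fix a
    have e: "((\<lambda>x. exp ((s - a) * x)) has_real_derivative exp ((s - a) * x) * (s - a)) (at x)"
      by (rule DERIV_fun_exp) (auto intro!: derivative_eq_intros)
    show "((\<lambda>x. poly (P a) x * exp ((s - a) * x)) has_real_derivative
        poly (pderiv (P a)) x * exp ((s - a) * x) + poly (P a) x * (exp ((s - a) * x) * (s - a))) (at x)"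
      using DERIV_mult[OF poly_DERIV[of "P a"] e] by (simp add: mult_ac)
  qed
  moreover have "(\<Sum>a\<in>A. poly (pderiv (P a)) x * exp ((s - a) * x)
                           + poly (P a) x * (exp ((s - a) * x) * (s - a)))
      = exp_sum A (exp_sum_dcoeffs P s) s x"
    unfolding exp_sum_def exp_sum_dcoeffs_def by (intro sum.cong) (auto simp: algebra_simps)
  ultimately show ?thesis unfolding exp_sum_def[abs_def] by simp
qed (simp add: exp_sum_def[abs_def])

lemma deriv_exp_sum: "deriv (exp_sum A P s) = exp_sum A (exp_sum_dcoeffs P s) s"
  using exp_sum_has_derivative DERIV_imp_deriv by blast

lemma degree_exp_sum_dcoeffs: "degree (exp_sum_dcoeffs P s a) \<le> degree (P a)"
proof -
  have "degree (exp_sum_dcoeffs P s a) \<le> max (degree (pderiv (P a))) (degree ([:s - a:] * P a))"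
    unfolding exp_sum_dcoeffs_def by (rule degree_add_le_max)
  moreover have "degree ([:s - a:] * P a) \<le> degree (P a)"
    by (simp add: degree_smult_le)
  ultimately show ?thesis by (simp add: degree_pderiv)
qed

lemma exp_sum_reshift: "exp_sum A P l y = exp ((l - s) * y) * exp_sum A P s y"
proof -
  have "exp_sum A P l y = (\<Sum>a\<in>A. exp ((l - s) * y) * (poly (P a) y * exp ((s - a) * y)))"
    unfolding exp_sum_def by (intro sum.cong refl) (simp add: mult_exp_exp algebra_simps)
  also have "\<dots> = exp ((l - s) * y) * exp_sum A P s y"
    unfolding exp_sum_def by (simp add: sum_distrib_left)
  finally show ?thesis .
qed

text \<open>Differentiating the sum taken with shift l (an element of A) removes one coefficient:
  it lowers the degree of P_l by one, or drops the exponent l when P_l is constant.\<close>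
lemma exp_sum_deriv_count:
  assumes A: "finite A" and l: "l \<in> A"
  obtains A' where "finite A'"
    "\<And>y. exp_sum A' (exp_sum_dcoeffs P l) l y = exp_sum A (exp_sum_dcoeffs P l) l y"
    "Suc (\<Sum>a\<in>A'. degree (exp_sum_dcoeffs P l a) + 1) \<le> (\<Sum>a\<in>A. degree (P a) + 1)"
proof -
  define Q where "Q = exp_sum_dcoeffs P l"
  define A' where "A' = (if degree (P l) = 0 then A - {l} else A)"
  have Ql: "Q l = pderiv (P l)" unfolding Q_def exp_sum_dcoeffs_def by simp
  have same: "exp_sum A' Q l y = exp_sum A Q l y" for y
  proof (cases "degree (P l) = 0")
    case True
    then have "Q l = 0" using Ql by (simp add: pderiv_eq_0_iff)
    then show ?thesis
      unfolding A'_def exp_sum_def using True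
        sum.remove[OF A l, of "\<lambda>a. poly (Q a) y * exp ((l - a) * y)"]
      by simp
  qed (simp add: A'_def)
  have rest: "(\<Sum>a\<in>A - {l}. degree (Q a) + 1) \<le> (\<Sum>a\<in>A - {l}. degree (P a) + 1)"
    by (intro sum_mono) (simp add: Q_def degree_exp_sum_dcoeffs)
  have tot: "(\<Sum>a\<in>A. degree (P a) + 1) = degree (P l) + 1 + (\<Sum>a\<in>A - {l}. degree (P a) + 1)"
    using sum.remove[OF A l, of "\<lambda>a. degree (P a) + 1"] by simp
  have "Suc (\<Sum>a\<in>A'. degree (Q a) + 1) \<le> (\<Sum>a\<in>A. degree (P a) + 1)"
  proof (cases "degree (P l) = 0")
    case True
    then show ?thesis using rest tot A'_def by simp
  next
    case False
    have "(\<Sum>a\<in>A'. degree (Q a) + 1) = degree (Q l) + 1 + (\<Sum>a\<in>A - {l}. degree (Q a) + 1)"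
      using sum.remove[OF A l, of "\<lambda>a. degree (Q a) + 1"] A'_def False by simp
    moreover have "degree (Q l) + 1 = degree (P l)" using Ql False by (simp add: degree_pderiv)
    ultimately show ?thesis using rest tot by simp
  qed
  moreover have "finite A'" using A A'_def by simp
  ultimately show ?thesis using that same unfolding Q_def by blast
qed

text \<open>Divide out one exponential, apply Rolle's theorem and induct on n.\<close>
lemma exp_sum_zeros:
  "finite A \<Longrightarrow> (\<Sum>a\<in>A. degree (P a) + 1) \<le> n \<Longrightarrow> finite Z \<Longrightarrow> n \<le> card Z \<Longrightarrow>
   (\<forall>z\<in>Z. exp_sum A P s z = 0) \<Longrightarrow> exp_sum A P s x = 0"
proof (induction n arbitrary: A P s Z x)
  case 0
  have "card A \<le> (\<Sum>a\<in>A. degree (P a) + 1)"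
    using sum_mono[of A "\<lambda>_. 1::nat" "\<lambda>a. degree (P a) + 1"] by simp
  then show ?case using 0 by (simp add: exp_sum_def)
next
  case (Suc n)
  show ?case
  proof (cases "A = {}")
    case True
    then show ?thesis by (simp add: exp_sum_def)
  next
    case False
    then obtain l where l: "l \<in> A" by blast
    let ?Q = "exp_sum_dcoeffs P l"
    obtain A' where A': "finite A'" "\<And>y. exp_sum A' ?Q l y = exp_sum A ?Q l y"
      "Suc (\<Sum>a\<in>A'. degree (?Q a) + 1) \<le> (\<Sum>a\<in>A. degree (P a) + 1)"
      using exp_sum_deriv_count[OF Suc.prems(1) l] by blast
    have zeros: "\<forall>z\<in>Z. exp_sum A P l z = 0"
      using Suc.prems(5) exp_sum_reshift[of A P l _ s] by simp
    obtain Z' where Z': "finite Z'" "n \<le> card Z'" "\<forall>z\<in>Z'. exp_sum A' ?Q l z = 0"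
      using Rolle_zero_count[OF exp_sum_has_derivative Suc.prems(3,4) zeros] A'(2) by auto
    have "(\<Sum>a\<in>A'. degree (?Q a) + 1) \<le> n" using A'(3) Suc.prems(2) by simp
    then have "exp_sum A ?Q l y = 0" for y
      using Suc.IH[OF A'(1) _ Z'] A'(2) by metis
    then have "(exp_sum A P l has_real_derivative 0) (at y)" for y
      using exp_sum_has_derivative[of A P l] by simp
    then have "exp_sum A P l x = exp_sum A P l z" for z using DERIV_isconst_all by blast
    moreover obtain z0 where "z0 \<in> Z" using Suc.prems(4) by fastforce
    ultimately have "exp_sum A P l x = 0" using zeros by metis
    then show ?thesis using exp_sum_reshift[of A P l x s] by simp
  qed
qed

lemma exp_sum_bounded:
  assumes "\<forall>a\<in>A. 0 < a"
  shows "\<exists>B. \<forall>x\<ge>0. \<bar>exp_sum A P 0 x\<bar> \<le> B"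
proof (intro exI allI impI)
  fix x :: real assume x: "0 \<le> x"
  have "\<bar>exp_sum A P 0 x\<bar> \<le> (\<Sum>a\<in>A. \<Sum>j\<le>degree (P a). \<bar>coeff (P a) j * (x ^ j * exp (- a * x))\<bar>)"
    unfolding exp_sum_def poly_altdef
    by (rule order_trans[OF sum_abs sum_mono], rule order_trans[OF _ sum_abs])
       (simp add: sum_distrib_left sum_distrib_right mult_ac)
  also have "\<dots> \<le> (\<Sum>a\<in>A. \<Sum>j\<le>degree (P a). \<bar>coeff (P a) j\<bar> * (fact j / a ^ j))"
  proof (intro sum_mono)
    fix a j assume "a \<in> A"
    then have "x ^ j * exp (- a * x) \<le> fact j / a ^ j" using assms x by (intro power_exp_bound) auto
    then show "\<bar>coeff (P a) j * (x ^ j * exp (- a * x))\<bar> \<le> \<bar>coeff (P a) j\<bar> * (fact j / a ^ j)"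
      using x by (simp add: abs_mult mult_left_mono del: times_divide_eq_right)
  qed
  finally show "\<bar>exp_sum A P 0 x\<bar> \<le> (\<Sum>a\<in>A. \<Sum>j\<le>degree (P a). \<bar>coeff (P a) j\<bar> * (fact j / a ^ j))" .
qed

section \<open>The space P_h as a space of exponential sums\<close>

definition positions :: "real list \<Rightarrow> real \<Rightarrow> nat set" where
  "positions h a = {i. i < length h \<and> h ! i = a}"

definition mult_in :: "real list \<Rightarrow> real \<Rightarrow> nat" where
  "mult_in h a = card (positions h a)"

definition power_index :: "real list \<Rightarrow> nat \<Rightarrow> nat" where
  "power_index h i = card {j. j < i \<and> h ! j = h ! i}"

lemma rank_bij:
  fixes S :: "nat set"
  assumes "finite S"
  shows "bij_betw (\<lambda>i. card (S \<inter> {..<i})) S {..<card S}"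
proof -
  let ?r = "\<lambda>i. card (S \<inter> {..<i})"
  have "?r i < ?r j" if "i \<in> S" "j \<in> S" "i < j" for i j
    using that assms by (intro psubset_card_mono) auto
  then have inj: "inj_on ?r S"
    by (intro strict_mono_on_imp_inj_on) (auto simp: strict_mono_on_def)
  have "?r ` S \<subseteq> {..<card S}"
    using assms by (auto intro!: psubset_card_mono)
  moreover have "card (?r ` S) = card S" using card_image[OF inj] .
  ultimately have "?r ` S = {..<card S}" by (simp add: card_subset_eq)
  then show ?thesis using inj by (simp add: bij_betw_def)
qed

lemma power_index_bij: "bij_betw (power_index h) (positions h a) {..<mult_in h a}"
proof -
  have "power_index h i = card (positions h a \<inter> {..<i})" if "i \<in> positions h a" for i
  proof -
    have "{j. j < i \<and> h ! j = h ! i} = positions h a \<inter> {..<i}"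
      using that unfolding positions_def by auto
    then show ?thesis unfolding power_index_def by simp
  qed
  moreover have "finite (positions h a)" unfolding positions_def by simp
  ultimately show ?thesis
    using rank_bij unfolding mult_in_def by (metis (no_types, lifting) bij_betw_cong)
qed

lemma sum_by_value: "(\<Sum>i<length h. f i) = (\<Sum>a\<in>set h. \<Sum>i\<in>positions h a. f i)"
proof -
  have "(\<Sum>a\<in>set h. \<Sum>i\<in>{x. x \<in> {..<length h} \<and> h ! x = a}. f i) = (\<Sum>i<length h. f i)"
    by (rule sum.group) auto
  moreover have "{x. x \<in> {..<length h} \<and> h ! x = a} = positions h a" for a
    unfolding positions_def by auto
  ultimately show ?thesis by simp
qed

lemma sum_mult_in: "(\<Sum>a\<in>set h. mult_in h a) = length h"
  using sum_by_value[of "\<lambda>_. 1::nat" h] unfolding mult_in_def by simp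

lemma poly_as_sum: "degree (p :: real poly) < n \<Longrightarrow> poly p x = (\<Sum>j<n. coeff p j * x ^ j)"
  unfolding poly_altdef by (rule sum.mono_neutral_left) (auto simp: coeff_eq_0)

lemma degree_grouped_coeff:
  assumes "a \<in> set h"
  shows "degree (\<Sum>i\<in>positions h a. monom (c i) (power_index h i)) < mult_in h a"
proof -
  have "positions h a \<noteq> {}" using assms unfolding positions_def by (auto simp: in_set_conv_nth)
  then have pos: "0 < mult_in h a" unfolding mult_in_def positions_def by (simp add: card_gt_0_iff)
  have "degree (\<Sum>i\<in>positions h a. monom (c i) (power_index h i)) \<le> mult_in h a - 1"
  proof (rule degree_sum_le)
    fix i assume "i \<in> positions h a"
    then have "power_index h i < mult_in h a" using power_index_bij[of h a] by (auto simp: bij_betw_def)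
    then show "degree (monom (c i) (power_index h i)) \<le> mult_in h a - 1"
      using degree_monom_le[of "c i" "power_index h i"] by linarith
  qed (simp add: positions_def)
  then show ?thesis using pos by linarith
qed

lemma Pspace_exp_sumE:
  assumes "p \<in> Pspace h"
  obtains P where "p = exp_sum (set h) P 0" "\<forall>a\<in>set h. degree (P a) < mult_in h a"
proof -
  obtain c where p: "p = (\<lambda>t. \<Sum>i<length h. c i * exp_basis h i t)"
    using assms unfolding Pspace_def by blast
  define P where "P a = (\<Sum>i\<in>positions h a. monom (c i) (power_index h i))" for a
  have "p t = exp_sum (set h) P 0 t" for t
  proof -
    have "p t = (\<Sum>a\<in>set h. \<Sum>i\<in>positions h a. c i * exp_basis h i t)"
      using p sum_by_value by simp
    also have "\<dots> = (\<Sum>a\<in>set h. poly (P a) t * exp ((0 - a) * t))"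
    proof (intro sum.cong refl)
      fix a
      have "poly (P a) t * exp ((0 - a) * t)
          = (\<Sum>i\<in>positions h a. c i * t ^ power_index h i * exp ((0 - a) * t))"
        unfolding P_def by (simp add: poly_sum poly_monom sum_distrib_right)
      also have "\<dots> = (\<Sum>i\<in>positions h a. c i * exp_basis h i t)"
        by (intro sum.cong refl) (simp add: exp_basis_def power_index_def positions_def)
      finally show "(\<Sum>i\<in>positions h a. c i * exp_basis h i t) = poly (P a) t * exp ((0 - a) * t)"
        by simp
    qed
    finally show ?thesis unfolding exp_sum_def .
  qed
  then show ?thesis
    using that degree_grouped_coeff unfolding P_def by blast
qed

lemma Pspace_exp_sumI:
  assumes deg: "\<forall>a\<in>set h. degree (P a) < mult_in h a"
  shows "exp_sum (set h) P 0 \<in> Pspace h"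
proof -
  define c where "c i = coeff (P (h ! i)) (power_index h i)" for i
  have "exp_sum (set h) P 0 t = (\<Sum>i<length h. c i * exp_basis h i t)" for t
  proof -
    have "(\<Sum>i<length h. c i * exp_basis h i t)
          = (\<Sum>a\<in>set h. \<Sum>i\<in>positions h a. c i * exp_basis h i t)"
      by (rule sum_by_value)
    also have "\<dots> = (\<Sum>a\<in>set h. poly (P a) t * exp ((0 - a) * t))"
    proof (intro sum.cong refl)
      fix a assume a: "a \<in> set h"
      have "(\<Sum>i\<in>positions h a. c i * exp_basis h i t)
          = (\<Sum>i\<in>positions h a. coeff (P a) (power_index h i) * t ^ power_index h i) * exp ((0 - a) * t)"
        unfolding sum_distrib_right
        by (intro sum.cong refl) (simp add: exp_basis_def power_index_def positions_def c_def)
      also have "(\<Sum>i\<in>positions h a. coeff (P a) (power_index h i) * t ^ power_index h i)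
          = (\<Sum>j<mult_in h a. coeff (P a) j * t ^ j)"
        by (rule sum.reindex_bij_betw[OF power_index_bij])
      also have "\<dots> = poly (P a) t" using poly_as_sum deg a by metis
      finally show "(\<Sum>i\<in>positions h a. c i * exp_basis h i t) = poly (P a) t * exp ((0 - a) * t)" .
    qed
    finally show ?thesis unfolding exp_sum_def by simp
  qed
  then show ?thesis unfolding Pspace_def by blast
qed

lemma Pspace_deriv: "p \<in> Pspace h \<Longrightarrow> deriv p \<in> Pspace h"
proof (elim Pspace_exp_sumE)
  fix P assume p: "p = exp_sum (set h) P 0" "\<forall>a\<in>set h. degree (P a) < mult_in h a"
  then have "\<forall>a\<in>set h. degree (exp_sum_dcoeffs P 0 a) < mult_in h a"
    using degree_exp_sum_dcoeffs le_less_trans by blast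
  then show "deriv p \<in> Pspace h" using p(1) deriv_exp_sum Pspace_exp_sumI by simp
qed

lemma Pspace_has_derivative: "p \<in> Pspace h \<Longrightarrow> (p has_real_derivative deriv p x) (at x)"
  by (metis Pspace_exp_sumE deriv_exp_sum exp_sum_has_derivative)

lemma Pspace_continuous: "p \<in> Pspace h \<Longrightarrow> continuous_on S p"
  by (meson Pspace_has_derivative DERIV_continuous continuous_at_imp_continuous_on)

lemma Pspace_scale: "p \<in> Pspace h \<Longrightarrow> (\<lambda>x. c * p x) \<in> Pspace h"
proof (elim Pspace_exp_sumE)
  fix P assume p: "p = exp_sum (set h) P 0" "\<forall>a\<in>set h. degree (P a) < mult_in h a"
  have "(\<lambda>x. c * p x) = exp_sum (set h) (\<lambda>a. smult c (P a)) 0"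
    using p(1) by (auto simp: exp_sum_def sum_distrib_left mult_ac)
  moreover have "\<forall>a\<in>set h. degree (smult c (P a)) < mult_in h a"
    using p(2) degree_smult_le le_less_trans by blast
  ultimately show ?thesis using Pspace_exp_sumI by simp
qed

lemma Pspace_diff: "p \<in> Pspace h \<Longrightarrow> q \<in> Pspace h \<Longrightarrow> (\<lambda>x. p x - q x) \<in> Pspace h"
proof (elim Pspace_exp_sumE)
  fix P Q
  assume p: "p = exp_sum (set h) P 0" "\<forall>a\<in>set h. degree (P a) < mult_in h a"
    and q: "q = exp_sum (set h) Q 0" "\<forall>a\<in>set h. degree (Q a) < mult_in h a"
  have "(\<lambda>x. p x - q x) = exp_sum (set h) (\<lambda>a. P a - Q a) 0"
    using p(1) q(1) by (auto simp: exp_sum_def sum_subtractf[symmetric] algebra_simps)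
  moreover have "\<forall>a\<in>set h. degree (P a - Q a) < mult_in h a"
    using p(2) q(2) degree_diff_le_max le_less_trans max_less_iff_conj by blast
  ultimately show ?thesis using Pspace_exp_sumI by simp
qed

lemma Pspace_shift: "p \<in> Pspace h \<Longrightarrow> (\<lambda>x. p (x + t)) \<in> Pspace h"
proof (elim Pspace_exp_sumE)
  fix P assume p: "p = exp_sum (set h) P 0" "\<forall>a\<in>set h. degree (P a) < mult_in h a"
  define Q where "Q a = smult (exp ((0 - a) * t)) (pcompose (P a) [:t, 1:])" for a
  have "exp ((0 - a) * (x + t)) = exp ((0 - a) * t) * exp ((0 - a) * x)" for a x
    by (simp add: mult_exp_exp algebra_simps)
  then have "(\<lambda>x. p (x + t)) = exp_sum (set h) Q 0"
    unfolding p(1) exp_sum_def Q_def by (simp add: poly_pcompose add.commute mult_ac)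
  moreover have "degree (Q a) \<le> degree (P a)" for a
    unfolding Q_def using degree_smult_le[of _ "pcompose (P a) [:t, 1:]"] by (simp add: degree_pcompose)
  then have "\<forall>a\<in>set h. degree (Q a) < mult_in h a"
    using p(2) le_less_trans by blast
  ultimately show ?thesis using Pspace_exp_sumI by simp
qed

lemma deriv_scale: "p \<in> Pspace h \<Longrightarrow> deriv (\<lambda>x. c * p x) x = c * deriv p x"
  by (intro DERIV_imp_deriv DERIV_cmult Pspace_has_derivative)

lemma deriv_shift: "p \<in> Pspace h \<Longrightarrow> deriv (\<lambda>x. p (x + t)) x = deriv p (x + t)"
  by (intro DERIV_imp_deriv DERIV_shift[THEN iffD1] Pspace_has_derivative)

lemma Pspace_zeros:
  assumes "p \<in> Pspace h" "finite Z" "length h \<le> card Z" "\<forall>z\<in>Z. p z = 0"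
  shows "p x = 0"
proof -
  obtain P where p: "p = exp_sum (set h) P 0" "\<forall>a\<in>set h. degree (P a) < mult_in h a"
    using Pspace_exp_sumE assms(1) by blast
  have "(\<Sum>a\<in>set h. degree (P a) + 1) \<le> (\<Sum>a\<in>set h. mult_in h a)"
    by (intro sum_mono) (use p(2) in auto)
  then have "(\<Sum>a\<in>set h. degree (P a) + 1) \<le> length h" using sum_mult_in by simp
  from exp_sum_zeros[OF _ this assms(2,3)] assms(4) p(1) show ?thesis by simp
qed

text \<open>If 0 is not an exponent, an element of P_h that is constant on an open interval is
  constant everywhere: adjoining the constant as a term with exponent 0 raises the
  coefficient count only to d + 1.\<close>
lemma Pspace_const_on_interval:
  assumes "0 \<notin> set h" "p \<in> Pspace h" "\<alpha> < \<beta>" "\<forall>x\<in>{\<alpha><..<\<beta>}. p x = K"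
  shows "p x = K"
proof -
  obtain P where P: "p = exp_sum (set h) P 0" "\<forall>a\<in>set h. degree (P a) < mult_in h a"
    using Pspace_exp_sumE[OF assms(2)] by blast
  define P' where "P' = (\<lambda>a. if a = 0 then [:-K:] else P a)"
  have P'_on_h: "(\<Sum>a\<in>set h. f (P' a)) = (\<Sum>a\<in>set h. f (P a))" for f :: "real poly \<Rightarrow> 'b::comm_monoid_add"
    unfolding P'_def using assms(1) by (intro sum.cong) auto
  have val: "exp_sum (insert 0 (set h)) P' 0 z = p z - K" for z
  proof -
    have "exp_sum (insert 0 (set h)) P' 0 z = poly (P' 0) z + exp_sum (set h) P' 0 z"
      unfolding exp_sum_def using assms(1) by (simp add: sum.insert)
    also have "exp_sum (set h) P' 0 z = p z"
      unfolding exp_sum_def P(1) P'_def using assms(1) by (intro sum.cong) auto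
    finally show ?thesis by (simp add: P'_def)
  qed
  have "(\<Sum>a\<in>insert 0 (set h). degree (P' a) + 1) = 1 + (\<Sum>a\<in>set h. degree (P a) + 1)"
    using assms(1) P'_on_h[of "\<lambda>q. degree q + 1"] by (simp add: P'_def)
  also have "(\<Sum>a\<in>set h. degree (P a) + 1) \<le> (\<Sum>a\<in>set h. mult_in h a)"
    by (intro sum_mono) (use P(2) in auto)
  finally have deg: "(\<Sum>a\<in>insert 0 (set h). degree (P' a) + 1) \<le> Suc (length h)"
    using sum_mult_in by simp
  obtain Z where Z: "finite Z" "card Z = Suc (length h)" "Z \<subseteq> {\<alpha><..<\<beta>}"
    using infinite_arbitrarily_large[OF infinite_Ioo[OF assms(3)]] by blast
  have "\<forall>z\<in>Z. exp_sum (insert 0 (set h)) P' 0 z = 0" using Z(3) assms(4) val by auto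
  then have "exp_sum (insert 0 (set h)) P' 0 x = 0" using exp_sum_zeros[OF _ deg Z(1)] Z(2) by simp
  then show ?thesis using val by simp
qed

section \<open>Boundedness on R_+ and the sup norm\<close>

lemma Pspace_bounded:
  assumes "\<forall>a\<in>set h. 0 < a" "p \<in> Pspace h"
  shows "\<exists>B. \<forall>x\<ge>0. \<bar>p x\<bar> \<le> B"
  using assms(2) by (elim Pspace_exp_sumE) (use exp_sum_bounded[OF assms(1)] in auto)

lemma sup_norm_le_iff:
  assumes "\<exists>B. \<forall>x\<ge>0. \<bar>p x\<bar> \<le> B"
  shows "sup_norm p \<le> c \<longleftrightarrow> (\<forall>x\<ge>0. \<bar>p x\<bar> \<le> c)"
proof -
  have bdd: "bdd_above ((\<lambda>t. \<bar>p t\<bar>) ` {0..})" using assms by (auto simp: bdd_above_def)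
  show ?thesis
  proof
    assume "sup_norm p \<le> c"
    then show "\<forall>x\<ge>0. \<bar>p x\<bar> \<le> c" unfolding sup_norm_def
      using cSUP_upper[OF _ bdd] by (meson atLeast_iff order_trans)
  next
    assume "\<forall>x\<ge>0. \<bar>p x\<bar> \<le> c"
    then show "sup_norm p \<le> c" unfolding sup_norm_def by (intro cSUP_least) auto
  qed
qed

lemma sup_norm_ge:
  assumes "\<exists>B. \<forall>x\<ge>0. \<bar>p x\<bar> \<le> B" "0 \<le> x"
  shows "\<bar>p x\<bar> \<le> sup_norm p"
  using sup_norm_le_iff[OF assms(1)] assms(2) by blast

section \<open>The h-Chebyshev polynomial\<close>

locale chebyshev =
  fixes h :: "real list" and T :: "real \<Rightarrow> real" and \<nu> :: "nat \<Rightarrow> real"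
  assumes cheb: "is_cheb_alt h T \<nu>"
    and length_ge_2: "2 \<le> length h"
    and h_pos: "\<forall>a\<in>set h. 0 < a"
begin

abbreviation "d \<equiv> length h"
abbreviation "T' \<equiv> deriv T"
abbreviation "T'' \<equiv> deriv T'"

lemma T_Pspace: "T \<in> Pspace h"
  and T_norm: "sup_norm T = 1"
  and nu_1: "\<nu> 1 = 0"
  and nu_step: "\<forall>j\<in>{1..<d}. \<nu> j < \<nu> (Suc j)"
  and T_alt: "\<forall>j\<in>{1..d}. T (\<nu> j) = (-1) ^ j"
  using cheb unfolding is_cheb_alt_def by auto

lemma unit_ball_iff: "p \<in> Pspace h \<Longrightarrow> sup_norm p \<le> 1 \<longleftrightarrow> (\<forall>x\<ge>0. \<bar>p x\<bar> \<le> 1)"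
  using sup_norm_le_iff[OF Pspace_bounded[OF h_pos]] by blast

lemma T_bound: "0 \<le> x \<Longrightarrow> \<bar>T x\<bar> \<le> 1"
  using unit_ball_iff[OF T_Pspace] T_norm by simp

lemma T'_Pspace: "T' \<in> Pspace h" and T''_Pspace: "T'' \<in> Pspace h"
  by (simp_all add: Pspace_deriv T_Pspace)

lemma T_deriv: "(T has_real_derivative T' x) (at x)"
  using Pspace_has_derivative[OF T_Pspace] .

lemma T'_deriv: "(T' has_real_derivative T'' x) (at x)"
  using Pspace_has_derivative[OF T'_Pspace] .

lemma T_continuous: "continuous_on S T"
  using Pspace_continuous[OF T_Pspace] .

lemma T'_continuous: "continuous_on S T'"
  using Pspace_continuous[OF T'_Pspace] .

lemma T_0: "T 0 = -1" and T_nu2: "T (\<nu> 2) = 1"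
  using T_alt nu_1 length_ge_2 by force+

lemma nu_strict_mono: "strict_mono_on {1..d} \<nu>"
  using chain_strict_mono_on[OF nu_step] .

lemma nu_pos: "2 \<le> j \<Longrightarrow> j \<le> d \<Longrightarrow> 0 < \<nu> j"
  using strict_mono_onD[OF nu_strict_mono, of 1 j] nu_1 by simp

lemma nu2_le: "2 \<le> j \<Longrightarrow> j \<le> d \<Longrightarrow> \<nu> 2 \<le> \<nu> j"
  using strict_mono_onD[OF nu_strict_mono, of 2 j] by (cases "j = 2") auto

lemma nu2_pos: "0 < \<nu> 2"
  using nu_pos length_ge_2 by simp

text \<open>The interior alternance points are extrema of T on R_+, hence critical points.\<close>
lemma T'_nu: assumes "2 \<le> j" "j \<le> d" shows "T' (\<nu> j) = 0"
proof -
  have pos: "0 < \<nu> j" using nu_pos assms by simp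
  have near: "\<bar>T y\<bar> \<le> 1" if "\<bar>\<nu> j - y\<bar> < \<nu> j" for y using T_bound that by simp
  have "T (\<nu> j) = (-1) ^ j" using T_alt assms by simp
  then consider "T (\<nu> j) = 1" | "T (\<nu> j) = -1" by (cases "even j") auto
  then show ?thesis
  proof cases
    case 1
    then show ?thesis using DERIV_local_max[OF T_deriv pos] near by (force simp: abs_le_iff)
  next
    case 2
    then show ?thesis using DERIV_local_min[OF T_deriv pos] near by (force simp: abs_le_iff)
  qed
qed

text \<open>T' has the d - 1 zeros nu_2, ..., nu_d; a further zero in (0, nu_2) would make
  T' vanish identically, whereas T(0) \<noteq> T(nu_2).\<close>
lemma T'_nonzero: assumes "0 < w" "w < \<nu> 2" shows "T' w \<noteq> 0"
proof
  assume w0: "T' w = 0"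
  define Z where "Z = insert w (\<nu> ` {2..d})"
  have "inj_on \<nu> {2..d}"
    using strict_mono_on_imp_inj_on[OF nu_strict_mono] by (rule inj_on_subset) auto
  moreover have "w \<notin> \<nu> ` {2..d}" using assms nu2_le by force
  ultimately have "card Z = Suc (card {2..d})" by (simp add: Z_def card_image)
  then have "d \<le> card Z" using length_ge_2 by simp
  moreover have "\<forall>z\<in>Z. T' z = 0" using w0 T'_nu Z_def by auto
  ultimately have "\<forall>x. (T has_real_derivative 0) (at x)"
    using Pspace_zeros[OF T'_Pspace] T_deriv Z_def by (metis finite_imageI finite_atLeastAtMost finite_insert)
  then have "T 0 = T (\<nu> 2)" using DERIV_isconst_all by blast
  then show False using T_0 T_nu2 by simp
qed

lemma T'_pos: assumes "0 < w" "w < \<nu> 2" shows "0 < T' w"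
proof (rule ccontr)
  assume "\<not> 0 < T' w"
  then have neg: "T' w < 0" using T'_nonzero assms by force
  obtain \<xi> where xi: "0 < \<xi>" "\<xi> < \<nu> 2" "T (\<nu> 2) - T 0 = (\<nu> 2 - 0) * T' \<xi>"
    using MVT2[OF nu2_pos, of T T'] T_deriv by blast
  then have "0 < T' \<xi>" using zero_less_mult_pos[of "\<nu> 2" "T' \<xi>"] T_0 T_nu2 nu2_pos by simp
  have sign_change: "T' a * T' b < 0" if "{a, b} = {w, \<xi>}" for a b
    using that neg \<open>0 < T' \<xi>\<close> by (auto simp: mult_neg_pos mult_pos_neg doubleton_eq_iff)
  have "w \<noteq> \<xi>" using neg \<open>0 < T' \<xi>\<close> by auto
  then obtain a b where ab: "{a, b} = {w, \<xi>}" "a < b" by (metis insert_commute linorder_neqE)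
  then obtain z where "a < z" "z < b" "T' z = 0"
    using IVT_sign_change[OF ab(2) T'_continuous sign_change[OF ab(1)]] by blast
  moreover have "0 < a" "b < \<nu> 2" using ab assms xi by (auto simp: doubleton_eq_iff)
  ultimately show False using T'_nonzero[of z] by simp
qed

text \<open>T(0) = -1 is the minimum of T on R_+, so T'(0) \<ge> 0.\<close>
lemma T'_0_nonneg: "0 \<le> T' 0"
proof (rule ccontr)
  assume "\<not> 0 \<le> T' 0"
  then obtain x where "0 < x" "T x < T 0"
    using neg_deriv_right[OF T_deriv, of 0 1] by auto
  then show False using T_bound[of x] T_0 by simp
qed

lemma T'_nonneg: "0 \<le> t \<Longrightarrow> t \<le> \<nu> 2 \<Longrightarrow> 0 \<le> T' t"
  using T'_0_nonneg T'_nu[of 2] length_ge_2 T'_pos[of t] by force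

lemma T_strict_mono: "strict_mono_on {0..\<nu> 2} T"
proof (rule strict_mono_onI)
  fix x y assume xy: "x \<in> {0..\<nu> 2}" "y \<in> {0..\<nu> 2}" "x < y"
  obtain z where z: "x < z" "z < y" "T y - T x = (y - x) * T' z"
    using MVT2[OF \<open>x < y\<close>, of T T'] T_deriv by blast
  have "0 < (y - x) * T' z" using xy z T'_pos[of z] by simp
  then show "T x < T y" using z(3) by linarith
qed

lemma T_inj: "inj_on T {0..\<nu> 2}"
  using T_strict_mono by (rule strict_mono_on_imp_inj_on)

lemma T_image: "T ` {0..\<nu> 2} = {-1..1}"
proof
  show "T ` {0..\<nu> 2} \<subseteq> {-1..1}" using T_bound by (auto simp: abs_le_iff)
  show "{-1..1} \<subseteq> T ` {0..\<nu> 2}"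
    using IVT'[of T 0 _ "\<nu> 2"] T_0 T_nu2 nu2_pos T_continuous by force
qed

definition T_inv :: "real \<Rightarrow> real" where
  "T_inv = the_inv_into {0..\<nu> 2} T"

lemma T_inv: "y \<in> {-1..1} \<Longrightarrow> T_inv y \<in> {0..\<nu> 2} \<and> T (T_inv y) = y"
  unfolding T_inv_def using T_image the_inv_into_into[OF T_inj] f_the_inv_into_f[OF T_inj]
  by (metis order_refl)

lemma T_inv_T: "t \<in> {0..\<nu> 2} \<Longrightarrow> T_inv (T t) = t"
  unfolding T_inv_def using the_inv_into_f_f[OF T_inj] by simp

lemma T_inv_continuous: "continuous_on {-1..1} T_inv"
  using continuous_on_inv[OF T_continuous compact_Icc] T_inv_T T_image by metis

subsection \<open>The comparison lemma\<close>

text \<open>Otherwise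
  r = T(. + s) - q dips below 0 right after its zero at 0, and r alternates in sign at
  that point and at nu_2 - s, ..., nu_d - s; this gives d zeros of r in all.\<close>
lemma deriv_le_T'_strict:
  assumes q: "q \<in> Pspace h" "\<forall>x\<ge>0. \<bar>q x\<bar> < 1" and s: "0 \<le> s" "s < \<nu> 2" "q 0 = T s"
  shows "deriv q 0 \<le> T' s"
proof (rule ccontr)
  assume contra: "\<not> ?thesis"
  define r where "r x = T (x + s) - q x" for x
  have r_Pspace: "r \<in> Pspace h"
    using Pspace_diff[OF Pspace_shift[OF T_Pspace] q(1)] unfolding r_def[abs_def] .
  have "((\<lambda>x. T (x + s)) has_real_derivative T' (0 + s)) (at 0)"
    using T_deriv DERIV_shift by blast
  then have r'0: "(r has_real_derivative T' s - deriv q 0) (at 0)"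
    unfolding r_def[abs_def] using DERIV_diff Pspace_has_derivative[OF q(1)] by fastforce
  have r0: "r 0 = 0" using s(3) by (simp add: r_def)
  obtain x0 where x0: "0 < x0" "x0 < \<nu> 2 - s" "r x0 < 0"
    using neg_deriv_right[OF r'0, of "\<nu> 2 - s"] contra s(2) r0 by auto
  define y where "y j = (if j = 1 then x0 else \<nu> j - s)" for j
  have y_step: "\<forall>j\<in>{1..<d}. y j < y (Suc j)"
    using nu_step x0(2) by (auto simp: y_def numeral_2_eq_2)
  have "(-1) ^ j * r (y j) > 0" if "j \<in> {1..d}" for j
  proof (cases "j = 1")
    case False
    then have j: "2 \<le> j" "j \<le> d" using that by auto
    then have "\<bar>q (\<nu> j - s)\<bar> < 1" using q(2) nu2_le[OF j] s by simp
    moreover have "r (y j) = (-1) ^ j - q (\<nu> j - s)" using False j T_alt by (simp add: y_def r_def)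
    ultimately show ?thesis by (cases "even j") (auto simp: abs_less_iff)
  qed (use x0 in \<open>simp add: y_def\<close>)
  then obtain Z where Z: "finite Z" "card Z = d - 1" "\<forall>z\<in>Z. x0 < z \<and> r z = 0"
    using alternation_zeros[OF Pspace_continuous[OF r_Pspace] y_step] by (auto simp: y_def)
  have "0 \<notin> Z" using Z(3) x0(1) by force
  then have "d \<le> card (insert 0 Z)" using Z(1,2) length_ge_2 by simp
  then have "r x = 0" for x
    using Pspace_zeros[OF r_Pspace, of "insert 0 Z"] Z r0 by auto
  then have "r = (\<lambda>_. 0)" by auto
  then have "(r has_real_derivative 0) (at 0)" by simp
  then have "T' s - deriv q 0 = 0" by (rule DERIV_unique[OF r'0])
  then show False using contra by simp
qed

lemma deriv_le_T'_shrunk: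
  assumes q: "q \<in> Pspace h" "\<forall>x\<ge>0. \<bar>q x\<bar> \<le> 1" and \<delta>: "0 < \<delta>" "\<delta> < 1"
  shows "(1 - \<delta>) * deriv q 0 \<le> T' (T_inv ((1 - \<delta>) * q 0))"
proof -
  define s where "s = T_inv ((1 - \<delta>) * q 0)"
  have "q 0 \<in> {-1..1}" using q(2) by (auto simp: abs_le_iff)
  then have shrunk: "(1 - \<delta>) * q 0 \<in> {-1..1}" "(1 - \<delta>) * q 0 < 1"
    using shrink_in_unit_interval \<delta> by blast+
  then have s: "s \<in> {0..\<nu> 2}" "T s = (1 - \<delta>) * q 0"
    using T_inv unfolding s_def by blast+
  then have "s \<noteq> \<nu> 2" using shrunk(2) T_nu2 by auto
  then have "s < \<nu> 2" using s(1) by simp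
  moreover have "\<forall>x\<ge>0. \<bar>(1 - \<delta>) * q x\<bar> < 1"
  proof (intro allI impI)
    fix x :: real assume "0 \<le> x"
    then have "(1 - \<delta>) * \<bar>q x\<bar> \<le> 1 - \<delta>" using q(2) \<delta> by (simp add: mult_left_le_one_le)
    moreover have "\<bar>(1 - \<delta>) * q x\<bar> = (1 - \<delta>) * \<bar>q x\<bar>" using \<delta> by (simp add: abs_mult)
    ultimately show "\<bar>(1 - \<delta>) * q x\<bar> < 1" using \<delta> by linarith
  qed
  ultimately have "deriv (\<lambda>x. (1 - \<delta>) * q x) 0 \<le> T' s"
    using deriv_le_T'_strict[OF Pspace_scale[OF q(1)]] s by auto
  then show ?thesis using deriv_scale[OF q(1)] by (simp add: s_def)
qed

text \<open>The comparison lemma for the closed unit ball: let \<delta> \<rightarrow> 0 in the shrunk version, using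
  the continuity of T_inv and T'.\<close>
lemma deriv_le_T':
  assumes q: "q \<in> Pspace h" "\<forall>x\<ge>0. \<bar>q x\<bar> \<le> 1" and t: "t \<in> {0..\<nu> 2}" "T t = q 0"
  shows "deriv q 0 \<le> T' t"
proof -
  define y where "y = q 0"
  have y: "y \<in> {-1..1}" using q(2) by (auto simp: y_def abs_le_iff)
  have near_0: "\<forall>\<^sub>F \<delta> in at_right 0. 0 < \<delta> \<and> \<delta> < (1::real)"
    using eventually_at_right_real[OF zero_less_one] by simp
  have "((\<lambda>\<delta>. (1 - \<delta>) * y) \<longlongrightarrow> (1 - 0) * y) (at_right 0)"
    by (intro tendsto_intros)
  moreover have "\<forall>\<^sub>F \<delta> in at_right 0. (1 - \<delta>) * y \<in> {-1..1}"
    using near_0 by eventually_elim (use shrink_in_unit_interval y in blast)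
  ultimately have "((\<lambda>\<delta>. T_inv ((1 - \<delta>) * y)) \<longlongrightarrow> T_inv y) (at_right 0)"
    using continuous_on_tendsto_compose[OF T_inv_continuous _ y] by simp
  then have "((\<lambda>\<delta>. T' (T_inv ((1 - \<delta>) * y))) \<longlongrightarrow> T' t) (at_right 0)"
    using T_inv_T[OF t(1)] t(2) y_def isCont_tendsto_compose[OF DERIV_isCont[OF T'_deriv]] by simp
  moreover have "((\<lambda>\<delta>. (1 - \<delta>) * deriv q 0) \<longlongrightarrow> (1 - 0) * deriv q 0) (at_right 0)"
    by (intro tendsto_intros)
  moreover have "\<forall>\<^sub>F \<delta> in at_right 0. (1 - \<delta>) * deriv q 0 \<le> T' (T_inv ((1 - \<delta>) * y))"
    using near_0 by eventually_elim (use deriv_le_T'_shrunk[OF q] y_def in auto)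
  ultimately show ?thesis by (intro tendsto_le[OF trivial_limit_at_right_real]) auto
qed

definition kappa_set :: "real \<Rightarrow> real set" where
  "kappa_set \<epsilon> = {(1 - p 0) / (deriv p 0 - \<epsilon> * p 0) | p.
      p \<in> Pspace h \<and> sup_norm p \<le> 1 \<and> deriv p 0 > \<epsilon> * p 0}"

definition ratio_set :: "real \<Rightarrow> real set" where
  "ratio_set \<epsilon> = {(1 - T t) / (T' t - \<epsilon> * T t) | t. t \<in> {0..\<nu> 2} \<and> T' t > \<epsilon> * T t}"

lemma ratio_set_nonempty: "0 < \<epsilon> \<Longrightarrow> ratio_set \<epsilon> \<noteq> {}"
proof -
  assume "0 < \<epsilon>"
  then have "(1 - T 0) / (T' 0 - \<epsilon> * T 0) \<in> ratio_set \<epsilon>"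
    unfolding ratio_set_def using T'_0_nonneg T_0 nu2_pos by (intro CollectI exI[of _ 0]) simp
  then show ?thesis by blast
qed

lemma ratio_set_subset: "ratio_set \<epsilon> \<subseteq> kappa_set \<epsilon>"
proof
  fix u assume "u \<in> ratio_set \<epsilon>"
  then obtain t where t: "u = (1 - T t) / (T' t - \<epsilon> * T t)" "t \<in> {0..\<nu> 2}" "T' t > \<epsilon> * T t"
    unfolding ratio_set_def by auto
  define p where "p x = T (x + t)" for x
  have p: "p \<in> Pspace h" using Pspace_shift[OF T_Pspace] unfolding p_def[abs_def] .
  moreover have "sup_norm p \<le> 1" using unit_ball_iff[OF p] T_bound t(2) by (simp add: p_def)
  moreover have "deriv p 0 = T' t" using deriv_shift[OF T_Pspace, of t 0] by (simp add: p_def[abs_def])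
  ultimately show "u \<in> kappa_set \<epsilon>"
    unfolding kappa_set_def using t by (intro CollectI exI[of _ p]) (simp add: p_def)
qed

text \<open>By the comparison lemma, every admissible p is dominated by a shift of T.\<close>
lemma kappa_set_dominated: "v \<in> kappa_set \<epsilon> \<Longrightarrow> \<exists>u\<in>ratio_set \<epsilon>. u \<le> v"
proof -
  assume "v \<in> kappa_set \<epsilon>"
  then obtain p where p: "v = (1 - p 0) / (deriv p 0 - \<epsilon> * p 0)" "p \<in> Pspace h" "sup_norm p \<le> 1"
    "deriv p 0 > \<epsilon> * p 0" unfolding kappa_set_def by auto
  have pb: "\<forall>x\<ge>0. \<bar>p x\<bar> \<le> 1" using unit_ball_iff[OF p(2)] p(3) by blast
  then have "p 0 \<in> {-1..1}" by (auto simp: abs_le_iff)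
  then obtain t where t: "t \<in> {0..\<nu> 2}" "T t = p 0" using T_image by (metis imageE)
  have le: "deriv p 0 \<le> T' t" using deriv_le_T'[OF p(2) pb t] .
  define u where "u = (1 - T t) / (T' t - \<epsilon> * T t)"
  have "u \<in> ratio_set \<epsilon>" unfolding ratio_set_def u_def using t le p(4) by force
  moreover have "u \<le> v" unfolding u_def p(1) t(2)
    by (rule divide_left_mono) (use le p(4) \<open>p 0 \<in> {-1..1}\<close> in auto)
  ultimately show ?thesis by blast
qed

lemma kappa_set_nonneg: "v \<in> kappa_set \<epsilon> \<Longrightarrow> 0 \<le> v"
  unfolding kappa_set_def using unit_ball_iff by (force simp: abs_le_iff)

theorem kappa_eq_Inf_ratio_set: "0 < \<epsilon> \<Longrightarrow> kappa h \<epsilon> = Inf (ratio_set \<epsilon>)"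
proof -
  assume e: "0 < \<epsilon>"
  have bK: "bdd_below (kappa_set \<epsilon>)" using kappa_set_nonneg by (auto simp: bdd_below_def)
  have bS: "bdd_below (ratio_set \<epsilon>)" by (rule bdd_below_mono[OF bK ratio_set_subset])
  have Sne: "ratio_set \<epsilon> \<noteq> {}" using ratio_set_nonempty[OF e] .
  have "Inf (kappa_set \<epsilon>) \<le> Inf (ratio_set \<epsilon>)"
    using Sne ratio_set_subset bK by (intro cInf_superset_mono) auto
  moreover have "Inf (ratio_set \<epsilon>) \<le> Inf (kappa_set \<epsilon>)"
    using Sne ratio_set_subset kappa_set_dominated cInf_lower[OF _ bS]
    by (intro cInf_greatest) (blast, meson order_trans)
  ultimately show ?thesis unfolding kappa_def kappa_set_def by simp
qed

text \<open>Any upper bound V for T' on [0, nu_2] bounds |p'| on R_+ for every p in the unit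
  ball: apply the comparison lemma to the shifts of p and of -p.\<close>
lemma deriv_bound:
  assumes V: "\<forall>t\<in>{0..\<nu> 2}. T' t \<le> V"
    and p: "p \<in> Pspace h" "\<forall>x\<ge>0. \<bar>p x\<bar> \<le> 1" and x: "0 \<le> x"
  shows "\<bar>deriv p x\<bar> \<le> V"
proof -
  have at_0: "deriv q 0 \<le> V" if q: "q \<in> Pspace h" "\<forall>x\<ge>0. \<bar>q x\<bar> \<le> 1" for q
  proof -
    have "q 0 \<in> {-1..1}" using q(2) by (auto simp: abs_le_iff)
    then obtain t where "t \<in> {0..\<nu> 2}" "T t = q 0" using T_image by (metis imageE)
    then show ?thesis using deriv_le_T'[OF q] V by fastforce
  qed
  define q where "q y = p (y + x)" for y
  have q: "q \<in> Pspace h" "\<forall>y\<ge>0. \<bar>q y\<bar> \<le> 1"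
    using Pspace_shift[OF p(1)] p(2) x by (auto simp: q_def[abs_def])
  have "deriv q 0 = deriv p x" using deriv_shift[OF p(1), of x 0] by (simp add: q_def[abs_def])
  moreover have "deriv (\<lambda>y. -1 * q y) 0 = - deriv q 0" using deriv_scale[OF q(1), of "-1" 0] by simp
  ultimately show ?thesis
    using at_0[OF q] at_0[OF Pspace_scale[OF q(1), of "-1"]] q(2) by auto
qed

lemma second_deriv_bound:
  assumes V: "0 < V" "\<forall>t\<in>{0..\<nu> 2}. T' t \<le> V"
    and p: "p \<in> Pspace h" "\<forall>x\<ge>0. \<bar>p x\<bar> \<le> 1" and x: "0 \<le> x"
  shows "\<bar>deriv (deriv p) x\<bar> \<le> V ^ 2"
proof -
  define w where "w y = (1 / V) * deriv p y" for y
  have w: "w \<in> Pspace h" using Pspace_scale[OF Pspace_deriv[OF p(1)]] unfolding w_def[abs_def] .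
  have "\<forall>y\<ge>0. \<bar>w y\<bar> \<le> 1"
    using deriv_bound[OF V(2) p] V(1) by (simp add: w_def abs_mult divide_le_eq)
  then have "\<bar>deriv w x\<bar> \<le> V" using deriv_bound[OF V(2) w _ x] by blast
  moreover have "deriv w x = (1 / V) * deriv (deriv p) x"
    unfolding w_def[abs_def] by (rule deriv_scale[OF Pspace_deriv[OF p(1)]])
  ultimately show ?thesis using V(1) by (simp add: abs_mult power2_eq_square divide_le_eq)
qed

lemma T'_bounded: "\<exists>V>0. \<forall>t\<in>{0..\<nu> 2}. T' t \<le> V"
proof -
  have "{0..\<nu> 2} \<noteq> {}" using nu2_pos by simp
  then obtain t0 where "\<forall>t\<in>{0..\<nu> 2}. T' t \<le> T' t0"
    using continuous_attains_sup[OF compact_Icc _ T'_continuous] by blast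
  then show ?thesis by (intro exI[of _ "max (T' t0) 1"]) (auto simp: le_max_iff_disj)
qed

lemma T''_le_M2: "0 \<le> x \<Longrightarrow> \<bar>T'' x\<bar> \<le> M2 h"
proof -
  assume x: "0 \<le> x"
  define S where "S = {sup_norm (deriv (deriv p)) | p. p \<in> Pspace h \<and> sup_norm p \<le> 1}"
  obtain V where V: "0 < V" "\<forall>t\<in>{0..\<nu> 2}. T' t \<le> V" using T'_bounded by blast
  have "bdd_above S"
  proof (rule bdd_aboveI)
    fix m assume "m \<in> S"
    then obtain p where p: "m = sup_norm (deriv (deriv p))" "p \<in> Pspace h" "sup_norm p \<le> 1"
      unfolding S_def by auto
    have "\<forall>x\<ge>0. \<bar>p x\<bar> \<le> 1" using unit_ball_iff[OF p(2)] p(3) by blast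
    then have "\<forall>x\<ge>0. \<bar>deriv (deriv p) x\<bar> \<le> V ^ 2"
      using second_deriv_bound[OF V p(2)] by blast
    then show "m \<le> V ^ 2"
      unfolding p(1)
      by (subst sup_norm_le_iff[OF Pspace_bounded[OF h_pos Pspace_deriv[OF Pspace_deriv[OF p(2)]]]])
  qed
  moreover have "sup_norm T'' \<in> S"
    unfolding S_def using T_Pspace T_norm by (intro CollectI exI[of _ T]) simp
  ultimately have "sup_norm T'' \<le> M2 h" unfolding M2_def S_def[symmetric] by (rule cSup_upper[rotated])
  moreover have "\<bar>T'' x\<bar> \<le> sup_norm T''" using sup_norm_ge[OF Pspace_bounded[OF h_pos T''_Pspace] x] .
  ultimately show ?thesis by simp
qed

text \<open>T'' is not constant on any interval: otherwise it is constant everywhere, T is then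
  a quadratic polynomial bounded on R_+, hence constant, contradicting T(0) \<noteq> T(nu_2).\<close>
lemma T''_not_const_on_interval:
  assumes "\<alpha> < \<beta>" "\<forall>x\<in>{\<alpha><..<\<beta>}. T'' x = K"
  shows False
proof -
  have "0 \<notin> set h" using h_pos by force
  then have "T'' x = K" for x using Pspace_const_on_interval[OF _ T''_Pspace assms] by blast
  then have T: "T x = -1 + T' 0 * x + K / 2 * x ^ 2" for x
    using const_second_deriv_quadratic[OF T_deriv, of K] T'_deriv T_0 by simp
  have "\<forall>x\<ge>0. \<bar>T' 0 * x + K / 2 * x ^ 2\<bar> \<le> 2"
    using T_bound T by (force simp: abs_le_iff)
  then have "K / 2 = 0 \<and> T' 0 = 0" by (rule bounded_quadratic_trivial)
  then show False using T[of "\<nu> 2"] T_nu2 by simp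
qed

lemma M2_pos: "0 < M2 h"
proof -
  have "0 \<le> M2 h" using T''_le_M2[of 0] by simp
  moreover have "M2 h \<noteq> 0"
  proof
    assume "M2 h = 0"
    then have "\<forall>x\<in>{0<..<1}. T'' x = 0" using T''_le_M2 by fastforce
    then show False using T''_not_const_on_interval[of 0 1 0] by simp
  qed
  ultimately show ?thesis by simp
qed

subsection \<open>The strict lower bound\<close>

text \<open>Where T increases, T'(t)^2 / 2 < M_2 (1 - T(t)): otherwise the Taylor lower bound
  T(t) + T'(t) x - M_2 x^2/2 reaches 1 at x = T'(t)/M_2, while T \<le> 1; rigidity then forces
  T'' = -M_2 on an interval.\<close>
lemma T'_square_lt:
  assumes t: "0 \<le> t" and v: "0 < T' t"
  shows "(T' t)^2 / 2 < M2 h * (1 - T t)"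
proof (rule ccontr)
  assume contra: "\<not> ?thesis"
  define M where "M = M2 h"
  have M: "0 < M" using M2_pos by (simp add: M_def)
  define x0 where "x0 = T' t / M"
  have x0: "0 < x0" using M v by (simp add: x0_def)
  have "T (t + x0) \<le> 1" using T_bound[of "t + x0"] t x0 by simp
  also have "1 \<le> T t + (T' t)^2 / (2 * M)"
    using contra M by (simp add: M_def field_simps)
  also have "\<dots> = T t + T' t * x0 - M / 2 * x0 ^ 2"
    using M by (simp add: x0_def field_simps power2_eq_square)
  finally have below_Taylor: "T (t + x0) \<le> T t + T' t * x0 - M / 2 * x0 ^ 2" .
  have "-M \<le> T'' x" if "t \<le> x" for x
    using T''_le_M2[of x] that t by (simp add: M_def abs_le_iff)
  then have "\<forall>z\<in>{t<..<t + x0}. T'' z = - M"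
    using Taylor_bound_rigid[OF T_deriv T'_deriv _ x0 below_Taylor] by blast
  then show False using T''_not_const_on_interval[of t "t + x0" "- M"] x0 by simp
qed

text \<open>The numerator of (1 - T)/(T' - \<epsilon> T) - 2\<epsilon>/(M_2 + 2\<epsilon>^2) is positive on [0, nu_2].\<close>
lemma numerator_pos:
  assumes e: "0 < \<epsilon>" and t: "t \<in> {0..\<nu> 2}"
  shows "0 < 2 * \<epsilon>^2 - 2 * \<epsilon> * T' t + M2 h * (1 - T t)"
proof -
  have eq: "2 * \<epsilon>^2 - 2 * \<epsilon> * T' t + M2 h * (1 - T t) =
      (T' t - 2 * \<epsilon>)^2 / 2 + (M2 h * (1 - T t) - (T' t)^2 / 2)"
    by (simp add: field_simps power2_eq_square)
  show ?thesis
  proof (cases "T' t = 0")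
    case True
    have "0 \<le> M2 h * (1 - T t)" using M2_pos T_bound[of t] t by (simp add: abs_le_iff)
    moreover have "0 < 2 * \<epsilon>^2" using e by simp
    ultimately show ?thesis using True by (simp add: add_pos_nonneg)
  next
    case False
    then have "0 < T' t" using T'_nonneg t by force
    then have "0 < M2 h * (1 - T t) - (T' t)^2 / 2" using T'_square_lt t by simp
    then show ?thesis using eq by (smt (verit) zero_le_divide_iff zero_le_power2)
  qed
qed

text \<open>By compactness of [0, nu_2], the numerator above is bounded below and the
  denominator above, which makes the bound for Inf (ratio_set \<epsilon>) strict.\<close>
theorem ratio_set_lower_bound:
  assumes e: "0 < \<epsilon>"
  shows "2 * \<epsilon> / (M2 h + 2 * \<epsilon>^2) < Inf (ratio_set \<epsilon>)"
proof -
  define C where "C = M2 h + 2 * \<epsilon>^2"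
  have C: "0 < C" using M2_pos by (simp add: C_def add_pos_nonneg)
  define N where "N t = 2 * \<epsilon>^2 - 2 * \<epsilon> * T' t + M2 h * (1 - T t)" for t
  define D where "D t = T' t - \<epsilon> * T t" for t
  have cont: "continuous_on {0..\<nu> 2} N" "continuous_on {0..\<nu> 2} D"
    unfolding N_def[abs_def] D_def[abs_def] by (intro continuous_intros T'_continuous T_continuous)+
  have ne: "{0..\<nu> 2} \<noteq> {}" using nu2_pos by simp
  obtain t1 where t1: "t1 \<in> {0..\<nu> 2}" "\<forall>t\<in>{0..\<nu> 2}. N t1 \<le> N t"
    using continuous_attains_inf[OF compact_Icc ne cont(1)] by blast
  obtain t2 where t2: "t2 \<in> {0..\<nu> 2}" "\<forall>t\<in>{0..\<nu> 2}. D t \<le> D t2"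
    using continuous_attains_sup[OF compact_Icc ne cont(2)] by blast
  have N: "0 < N t1" using numerator_pos[OF e t1(1)] by (simp add: N_def)
  have "0 < D 0" using T'_0_nonneg T_0 e by (simp add: D_def)
  then have D: "0 < D t2" using t2 nu2_pos by force
  define \<eta> where "\<eta> = N t1 / (D t2 * C)"
  have "2 * \<epsilon> / C + \<eta> \<le> u" if u: "u \<in> ratio_set \<epsilon>" for u
  proof -
    obtain t where "u = (1 - T t) / (T' t - \<epsilon> * T t)" "t \<in> {0..\<nu> 2}" "\<epsilon> * T t < T' t"
      using u unfolding ratio_set_def by blast
    then have t: "u = (1 - T t) / D t" "t \<in> {0..\<nu> 2}" "0 < D t" by (simp_all add: D_def)
    have "u - 2 * \<epsilon> / C = N t / (D t * C)"
      unfolding t(1) N_def C_def using t(3) C[unfolded C_def]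
      by (simp add: field_simps power2_eq_square D_def)
    moreover have "N t1 / (D t2 * C) \<le> N t / (D t * C)"
    proof (rule frac_le)
      show "N t1 \<le> N t" using t1 t(2) by blast
      then show "0 \<le> N t" using N by linarith
      show "0 < D t * C" using t(3) C by simp
      show "D t * C \<le> D t2 * C" using t2 t(2) C by simp
    qed
    ultimately show ?thesis unfolding \<eta>_def by simp
  qed
  then have "2 * \<epsilon> / C + \<eta> \<le> Inf (ratio_set \<epsilon>)"
    using ratio_set_nonempty[OF e] by (intro cInf_greatest) auto
  moreover have "0 < \<eta>" using N D C by (simp add: \<eta>_def)
  ultimately show ?thesis by (simp add: C_def)
qed

end

theorem proposition3:
  fixes d :: nat and \<epsilon> :: real and h :: "real list"
    and T :: "real \<Rightarrow> real" and \<nu> :: "nat \<Rightarrow> real"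
  assumes "d \<ge> 2" and "\<epsilon> > 0" and "h \<in> Delta d"
    and "is_cheb_alt h T \<nu>"
  shows "kappa h \<epsilon> = Inf {(1 - T t) / (deriv T t - \<epsilon> * T t) | t.
            t \<in> {0..\<nu> 2} \<and> deriv T t > \<epsilon> * T t}
     \<and> kappa h \<epsilon> > 2 * \<epsilon> / (M2 h + 2 * \<epsilon>^2)"
proof -
  interpret chebyshev h T \<nu>
    using assms unfolding Delta_def by unfold_locales auto
  show ?thesis
    using kappa_eq_Inf_ratio_set[OF assms(2)] ratio_set_lower_bound[OF assms(2)]
    unfolding ratio_set_def by simp
qed

end
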